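(* Let $\mathbf d=(d_1,\ldots,d_n)$ be a degree sequence and $g_n$ as defined below. Then for every $v\in[n]$ and every integer $k$ with $2\le k\le n-2$, \[\frac{n-k}{n-k+(k+1)d_v}\,g_n(k+1)\ \le\ \mathbb P(\mathfrak s_n(v)>k)\ \le\ \frac{n-k+1}{n-k+1+k d_v}\,g_n(k).\]
   Context: A degree sequence is $\mathbf d=(d_1,\ldots,d_n)\in\mathbb N_0^n$ with $\sum_j d_j=n$. Let $\mathfrak F(\mathbf d)=\{f:[n]\to[n]: |f^{-1}(\{i\})|=d_i\ \forall i\}$ and let $F$ be uniform on $\mathfrak F(\mathbf d)$. The six-length is $\mathfrak s_f(v)=\min\{k\in\mathbb N: f^{(k)}(v)\in\{f^{(j)}(v):0\le j\le k-1\}\}$ ($f^{(k)}$ the $k$-fold composition, $f^{(0)}=\mathrm{id}$); $\mathfrak s_n(v)=\mathfrak s_F(v)$. $\langle n\rangle_k=n!/(n-k)!$ and $g_n(k)=\frac{k!}{\langle n\rangle_k}\sum_{1\le i_1<\cdots<i_k\le n}\prod_{j=1}^k d_{i_j}$. *)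

theory Defs
  imports "HOL-Probability.Probability"
begin

(* Functions [n] -> [n] are represented extensionally (PiE over {1..n});
   the degree sequence d :: nat => nat matters only on {1..n}. *)

definition degree_seq :: "nat \<Rightarrow> (nat \<Rightarrow> nat) \<Rightarrow> bool" where
  "degree_seq n d \<longleftrightarrow> (\<Sum>j\<in>{1..n}. d j) = n"

definition Fd :: "nat \<Rightarrow> (nat \<Rightarrow> nat) \<Rightarrow> (nat \<Rightarrow> nat) set" where
  "Fd n d = {f \<in> {1..n} \<rightarrow>\<^sub>E {1..n}. \<forall>i\<in>{1..n}. card {j\<in>{1..n}. f j = i} = d i}"

definition six_length :: "(nat \<Rightarrow> nat) \<Rightarrow> nat \<Rightarrow> nat" where
  "six_length f v = (LEAST k. k \<ge> 1 \<and> (f ^^ k) v \<in> {(f ^^ j) v | j. j \<le> k - 1})"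

definition falling :: "nat \<Rightarrow> nat \<Rightarrow> real" where
  "falling n k = fact n / fact (n - k)"

definition g_n :: "nat \<Rightarrow> (nat \<Rightarrow> nat) \<Rightarrow> nat \<Rightarrow> real" where
  "g_n n d k = fact k / falling n k *
     (\<Sum>S\<in>{S. S \<subseteq> {1..n} \<and> card S = k}. \<Prod>i\<in>S. real (d i))"

definition prob_six_gt :: "nat \<Rightarrow> (nat \<Rightarrow> nat) \<Rightarrow> nat \<Rightarrow> nat \<Rightarrow> real" where
  "prob_six_gt n d v k =
     measure_pmf.prob (pmf_of_set (Fd n d)) {f. six_length f v > k}"

end

theory Submission
  imports Defs "HOL-Combinatorics.Multiset_Permutations"
begin

text \<open>A uniform map with in-degrees \<open>d\<close> sends a given point to \<open>y\<close> with probability \<open>d\<^sub>y / n\<close>,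
  and conditioned on this it is again uniform, on one point fewer and with \<open>d\<^sub>y\<close> lowered by one.
  Following the orbit of \<open>v\<close> therefore gives
  \<open>P(s\<^sub>n(v) > k) = k! e\<^sub>k / \<langle>n\<rangle>\<^sub>k\<close>, where \<open>e\<^sub>k\<close> is the \<open>k\<close>-th elementary symmetric
  polynomial of the degrees on \<open>[n] - {v}\<close>. Splitting the \<open>k\<close>-sets in \<open>g\<^sub>n(k)\<close> according to
  whether they contain \<open>v\<close> yields
  \<open>(n-k+1) g\<^sub>n(k) = (n-k+1) P(s\<^sub>n(v) > k) + k d\<^sub>v P(s\<^sub>n(v) > k-1)\<close>,
  so \<open>(n-k+1) g\<^sub>n(k) / (n-k+1+k d\<^sub>v)\<close> is a weighted mean of \<open>P(s\<^sub>n(v) > k)\<close> and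
  \<open>P(s\<^sub>n(v) > k-1)\<close>. Both bounds follow since \<open>P(s\<^sub>n(v) > k)\<close> is nonincreasing in \<open>k\<close>.\<close>

definition degree_maps :: "'a set \<Rightarrow> 'b set \<Rightarrow> ('b \<Rightarrow> nat) \<Rightarrow> ('a \<Rightarrow> 'b) set" where
  "degree_maps A B d = {f \<in> A \<rightarrow>\<^sub>E B. \<forall>i\<in>B. card {j\<in>A. f j = i} = d i}"

lemma Fd_eq_degree_maps: "Fd n d = degree_maps {1..n} {1..n} d"
  unfolding Fd_def degree_maps_def by simp

lemma finite_degree_maps: "finite A \<Longrightarrow> finite B \<Longrightarrow> finite (degree_maps A B d)"
  unfolding degree_maps_def by (rule finite_subset[OF _ finite_PiE[of A "\<lambda>_. B"]]) auto

lemma fun_upd_undefined_in_degree_maps: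
  assumes "f \<in> degree_maps A B d" "a \<in> A" "f a = b" "finite A"
  shows "f(a := undefined) \<in> degree_maps (A - {a}) B (d(b := d b - 1))"
proof -
  have f: "f \<in> A \<rightarrow>\<^sub>E B" "\<And>i. i \<in> B \<Longrightarrow> card {j\<in>A. f j = i} = d i"
    using assms(1) unfolding degree_maps_def by auto
  have "{j\<in>A - {a}. (f(a := undefined)) j = i} = {j\<in>A. f j = i} - {a}" for i
    by auto
  then have "card {j\<in>A - {a}. (f(a := undefined)) j = i} = (d(b := d b - 1)) i" if "i \<in> B" for i
    using f(2)[OF that] assms(2-4) by (cases "i = b") auto
  moreover have "f(a := undefined) \<in> (A - {a}) \<rightarrow>\<^sub>E B"
    using f(1) by (auto simp: PiE_def extensional_def)
  ultimately show ?thesis unfolding degree_maps_def by blast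
qed

lemma fun_upd_in_degree_maps:
  assumes "g \<in> degree_maps (A - {a}) B (d(b := d b - 1))" "a \<in> A" "b \<in> B" "1 \<le> d b" "finite A"
  shows "g(a := b) \<in> degree_maps A B d"
proof -
  have g: "g \<in> (A - {a}) \<rightarrow>\<^sub>E B" "\<And>i. i \<in> B \<Longrightarrow> card {j\<in>A - {a}. g j = i} = (d(b := d b - 1)) i"
    using assms(1) unfolding degree_maps_def by auto
  have "{j\<in>A. (g(a := b)) j = i} = (if i = b then insert a else id) {j\<in>A - {a}. g j = i}" for i
    using assms(2) by auto
  then have "card {j\<in>A. (g(a := b)) j = i} = d i" if "i \<in> B" for i
    using g(2)[OF that] assms(4,5) by (cases "i = b") auto
  moreover have "g(a := b) \<in> A \<rightarrow>\<^sub>E B"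
    using g(1) assms(2,3) by (auto simp: PiE_def extensional_def)
  ultimately show ?thesis unfolding degree_maps_def by blast
qed

lemma card_degree_maps_restrict_value:
  assumes "a \<in> A" "b \<in> B" "1 \<le> d b" "finite A" and P: "\<And>f x. P (f(a := x)) = P f"
  shows "card {f \<in> degree_maps A B d. f a = b \<and> P f}
       = card {g \<in> degree_maps (A - {a}) B (d(b := d b - 1)). P g}"
proof (rule bij_betw_same_card[OF bij_betw_byWitness[where f' = "\<lambda>g. g(a := b)"]])
  show "\<forall>f\<in>{f \<in> degree_maps A B d. f a = b \<and> P f}. f(a := undefined, a := b) = f"
    by auto
  show "\<forall>g\<in>{g \<in> degree_maps (A - {a}) B (d(b := d b - 1)). P g}. g(a := b, a := undefined) = g"
    unfolding degree_maps_def by (auto simp: PiE_def extensional_def fun_eq_iff)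
  show "(\<lambda>f. f(a := undefined)) ` {f \<in> degree_maps A B d. f a = b \<and> P f}
      \<subseteq> {g \<in> degree_maps (A - {a}) B (d(b := d b - 1)). P g}"
    using fun_upd_undefined_in_degree_maps assms P by fastforce
  show "(\<lambda>g. g(a := b)) ` {g \<in> degree_maps (A - {a}) B (d(b := d b - 1)). P g}
      \<subseteq> {f \<in> degree_maps A B d. f a = b \<and> P f}"
    using fun_upd_in_degree_maps assms P by fastforce
qed

lemma comp_transpose_in_degree_maps:
  assumes "f \<in> degree_maps A B d" "a \<in> A" "a' \<in> A"
  shows "f \<circ> Transposition.transpose a a' \<in> degree_maps A B d"
proof -
  let ?t = "Transposition.transpose a a'"
  have f: "f \<in> A \<rightarrow>\<^sub>E B" "\<And>i. i \<in> B \<Longrightarrow> card {j\<in>A. f j = i} = d i"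
    using assms(1) unfolding degree_maps_def by auto
  have t_mem: "?t x \<in> A \<longleftrightarrow> x \<in> A" for x
    using assms(2,3) by (auto simp: Transposition.transpose_def)
  have "{j\<in>A. (f \<circ> ?t) j = i} = ?t ` {j\<in>A. f j = i}" for i
    using t_mem by (auto simp: image_iff) (metis transpose_involutory)
  then have "card {j\<in>A. (f \<circ> ?t) j = i} = d i" if "i \<in> B" for i
    using f(2)[OF that] by (simp add: card_image)
  moreover have "f \<circ> ?t \<in> A \<rightarrow>\<^sub>E B"
    using f(1) t_mem assms(2,3) by (auto simp: PiE_iff extensional_def)
  ultimately show ?thesis unfolding degree_maps_def by blast
qed

lemma card_degree_maps_value_at_eq:
  assumes "a \<in> A" "a' \<in> A"
  shows "card {f \<in> degree_maps A B d. f a = b} = card {f \<in> degree_maps A B d. f a' = b}"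
proof (rule bij_betw_same_card[OF bij_betw_byWitness[where f' = "\<lambda>f. f \<circ> Transposition.transpose a a'"]])
  show "(\<lambda>f. f \<circ> Transposition.transpose a a') ` {f \<in> degree_maps A B d. f a = b}
      \<subseteq> {f \<in> degree_maps A B d. f a' = b}"
    using comp_transpose_in_degree_maps assms by fastforce
  show "(\<lambda>f. f \<circ> Transposition.transpose a a') ` {f \<in> degree_maps A B d. f a' = b}
      \<subseteq> {f \<in> degree_maps A B d. f a = b}"
    using comp_transpose_in_degree_maps assms by fastforce
qed (simp_all add: comp_assoc)

text \<open>Double counting the pairs \<open>(f, a')\<close> with \<open>f a' = b\<close>; by the previous lemma every
  \<open>a' \<in> A\<close> contributes equally.\<close>

lemma card_degree_maps_value_at_mult:
  assumes "a \<in> A" "b \<in> B" "finite A" "finite B"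
  shows "card {f \<in> degree_maps A B d. f a = b} * card A = d b * card (degree_maps A B d)"
proof -
  let ?F = "degree_maps A B d"
  have "(\<Sum>a'\<in>A. card {f \<in> ?F. f a' = b}) = (\<Sum>a'\<in>A. card {f \<in> ?F. f a = b})"
    by (rule sum.cong[OF refl], rule card_degree_maps_value_at_eq) (use assms(1) in auto)
  then have "card {f \<in> ?F. f a = b} * card A = (\<Sum>a'\<in>A. card {f \<in> ?F. f a' = b})"
    by simp
  also have "\<dots> = (\<Sum>a'\<in>A. \<Sum>f\<in>?F. if f a' = b then 1 else 0)"
    using finite_degree_maps[OF assms(3,4)] by (simp add: sum.If_cases Int_def)
  also have "\<dots> = (\<Sum>f\<in>?F. \<Sum>a'\<in>A. if f a' = b then 1 else 0)"
    by (rule sum.swap)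
  also have "\<dots> = (\<Sum>f\<in>?F. d b)"
    using assms(2,3) by (intro sum.cong) (auto simp: degree_maps_def sum.If_cases Int_def)
  finally show ?thesis by simp
qed

lemma card_degree_maps_remove_point:
  assumes "a \<in> A" "b \<in> B" "1 \<le> d b" "finite A" "finite B"
  shows "card (degree_maps (A - {a}) B (d(b := d b - 1))) * card A = d b * card (degree_maps A B d)"
  using card_degree_maps_restrict_value[of a A b B d "\<lambda>_. True"] assms
    card_degree_maps_value_at_mult[OF assms(1,2,4,5), of d] by simp

lemma degree_maps_nonempty:
  assumes "finite A" "finite B" "(\<Sum>b\<in>B. d b) = card A"
  shows "degree_maps A B d \<noteq> {}"
  using assms
proof (induction A arbitrary: d rule: finite_induct)
  case empty
  then have "(\<lambda>_. undefined) \<in> degree_maps {} B d"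
    by (simp add: degree_maps_def)
  then show ?case by blast
next
  case (insert a A)
  have "(\<Sum>b\<in>B. d b) \<noteq> 0"
    using insert.prems insert.hyps by simp
  then obtain b where b: "b \<in> B" "1 \<le> d b"
    by (metis One_nat_def Suc_leI neq0_conv sum.neutral)
  have "(\<Sum>c\<in>B. (d(b := d b - 1)) c) = card A"
    using insert b by (simp add: sum.remove[of B b])
  then obtain g where "g \<in> degree_maps A B (d(b := d b - 1))"
    using insert.IH insert.prems(1) by blast
  then have "g(a := b) \<in> degree_maps (insert a A) B d"
    using fun_upd_in_degree_maps[of g "insert a A" a B d b] b insert.hyps by simp
  then show ?case by blast
qed

fun orbit_prefix :: "('a \<Rightarrow> 'a) \<Rightarrow> 'a \<Rightarrow> 'a list \<Rightarrow> bool" where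
  "orbit_prefix f a [] = True"
| "orbit_prefix f a (y # ys) = (f a = y \<and> orbit_prefix f y ys)"

lemma orbit_prefix_iff: "orbit_prefix f a xs \<longleftrightarrow> xs = map (\<lambda>i. (f ^^ Suc i) a) [0..<length xs]"
proof (induction xs arbitrary: a)
  case (Cons y ys)
  have "map (\<lambda>i. (f ^^ Suc i) a) [0..<length (y # ys)] = f a # map (\<lambda>i. (f ^^ Suc i) (f a)) [0..<length ys]"
    by (simp only: length_Cons map_upt_Suc) (simp add: funpow_Suc_right del: funpow.simps)
  then show ?case using Cons.IH[of y] by auto
qed simp

lemma orbit_prefix_fun_upd: "a \<notin> set (y # ys) \<Longrightarrow> orbit_prefix (f(a := x)) y ys = orbit_prefix f y ys"
  by (induction ys arbitrary: y) auto

lemma prod_lessThan_Suc_diff: "(\<Prod>i<Suc m. N - i) = N * (\<Prod>i<m. N - 1 - i)"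
  by (induction m) (simp_all add: mult_ac)

lemma card_degree_maps_orbit_prefix:
  assumes "finite A" "finite B" "distinct (a # xs)" "set (a # xs) \<subseteq> A" "set xs \<subseteq> B"
  shows "card {f \<in> degree_maps A B d. orbit_prefix f a xs} * (\<Prod>i<length xs. card A - i)
       = prod_list (map d xs) * card (degree_maps A B d)"
  using assms
proof (induction xs arbitrary: a A d)
  case (Cons y ys)
  show ?case
  proof (cases "d y = 0")
    case True
    have "f a \<noteq> y" if "f \<in> degree_maps A B d" for f
    proof
      assume "f a = y"
      then have "a \<in> {j\<in>A. f j = y}" "card {j\<in>A. f j = y} = 0"
        using that True Cons.prems by (auto simp: degree_maps_def)
      then show False
        using Cons.prems(1) by (auto simp: card_eq_0_iff)
    qed
    then have "card {f \<in> degree_maps A B d. orbit_prefix f a (y # ys)} = 0"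
      by (metis (mono_tags, lifting) card.empty empty_Collect_eq orbit_prefix.simps(2))
    with True show ?thesis by simp
  next
    case False
    let ?d = "d(y := d y - 1)"
    have a: "a \<in> A" "a \<notin> set (y # ys)" and y: "y \<in> B" "y \<notin> set ys"
      using Cons.prems by auto
    let ?F' = "degree_maps (A - {a}) B ?d"
    have orbit: "card {f \<in> degree_maps A B d. orbit_prefix f a (y # ys)}
        = card {g \<in> ?F'. orbit_prefix g y ys}"
      using card_degree_maps_restrict_value[of a A y B d "\<lambda>f. orbit_prefix f y ys"]
        orbit_prefix_fun_upd[OF a(2)] a y False Cons.prems(1) by (simp add: conj_commute)
    have IH: "card {g \<in> ?F'. orbit_prefix g y ys} * (\<Prod>i<length ys. card A - 1 - i)
        = prod_list (map d ys) * card ?F'"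
    proof -
      have "card {g \<in> ?F'. orbit_prefix g y ys} * (\<Prod>i<length ys. card (A - {a}) - i)
          = prod_list (map ?d ys) * card ?F'"
        by (rule Cons.IH) (use Cons.prems a in auto)
      then show ?thesis
        using a(1) y(2) Cons.prems(1) by (simp add: map_fun_upd)
    qed
    have "card {f \<in> degree_maps A B d. orbit_prefix f a (y # ys)} * (\<Prod>i<length (y # ys). card A - i)
        = (card {g \<in> ?F'. orbit_prefix g y ys} * (\<Prod>i<length ys. card A - 1 - i)) * card A"
      unfolding orbit length_Cons prod_lessThan_Suc_diff by (simp only: mult_ac)
    also have "\<dots> = prod_list (map d ys) * (card ?F' * card A)"
      unfolding IH by simp
    also have "\<dots> = prod_list (map d (y # ys)) * card (degree_maps A B d)"
      using card_degree_maps_remove_point[of a A y B d] a y False Cons.prems(1,2) by simp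
    finally show ?thesis .
  qed
qed simp

lemma repeated_iterate_iff_not_inj:
  "(\<exists>m\<le>k. 1 \<le> m \<and> (f ^^ m) v \<in> {(f ^^ j) v | j. j \<le> m - 1}) \<longleftrightarrow> \<not> inj_on (\<lambda>i. (f ^^ i) v) {..k}"
proof
  assume "\<exists>m\<le>k. 1 \<le> m \<and> (f ^^ m) v \<in> {(f ^^ j) v | j. j \<le> m - 1}"
  then obtain m j where "m \<le> k" "1 \<le> m" "j \<le> m - 1" "(f ^^ m) v = (f ^^ j) v"
    by blast
  moreover from this have "j \<noteq> m" "j \<le> k"
    by linarith+
  ultimately show "\<not> inj_on (\<lambda>i. (f ^^ i) v) {..k}"
    using inj_onD[of "\<lambda>i. (f ^^ i) v" "{..k}" m j] by auto
next
  assume "\<not> inj_on (\<lambda>i. (f ^^ i) v) {..k}"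
  then obtain i j where "i \<noteq> j" "i \<le> k" "j \<le> k" "(f ^^ j) v = (f ^^ i) v"
    unfolding inj_on_def by auto
  then have "\<exists>i j. i < j \<and> j \<le> k \<and> (f ^^ j) v = (f ^^ i) v"
    by (metis linorder_neqE_nat)
  then show "\<exists>m\<le>k. 1 \<le> m \<and> (f ^^ m) v \<in> {(f ^^ j) v | j. j \<le> m - 1}"
    by force
qed

lemma six_length_gt_iff_inj:
  assumes "finite S" "f ` S \<subseteq> S" "v \<in> S"
  shows "k < six_length f v \<longleftrightarrow> inj_on (\<lambda>i. (f ^^ i) v) {..k}"
proof -
  define P where "P m \<longleftrightarrow> 1 \<le> m \<and> (f ^^ m) v \<in> {(f ^^ j) v | j. j \<le> m - 1}" for m
  have iterates: "(f ^^ i) v \<in> S" for i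
    by (induction i) (use assms in auto)
  have "\<not> inj_on (\<lambda>i. (f ^^ i) v) {..card S}"
  proof
    assume "inj_on (\<lambda>i. (f ^^ i) v) {..card S}"
    then have "card {..card S} \<le> card S"
      by (rule card_inj_on_le) (use iterates assms(1) in auto)
    then show False by simp
  qed
  then have "\<exists>m\<le>card S. P m"
    unfolding P_def repeated_iterate_iff_not_inj .
  then have "\<exists>m. P m"
    by blast
  then have least: "P (LEAST m. P m)"
    by (rule LeastI_ex)
  have "k < (LEAST m. P m) \<longleftrightarrow> (\<forall>m\<le>k. \<not> P m)"
  proof
    show "\<forall>m\<le>k. \<not> P m" if "k < (LEAST m. P m)"
    proof (intro allI impI)
      fix m
      assume "m \<le> k"
      with that have "m < (LEAST m. P m)" by simp
      then show "\<not> P m" by (rule not_less_Least)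
    qed
    show "k < (LEAST m. P m)" if "\<forall>m\<le>k. \<not> P m"
      using that least not_le by blast
  qed
  moreover have "six_length f v = (LEAST m. P m)"
    by (simp add: six_length_def P_def)
  moreover have "(\<forall>m\<le>k. \<not> P m) \<longleftrightarrow> inj_on (\<lambda>i. (f ^^ i) v) {..k}"
    using repeated_iterate_iff_not_inj[of k f v] unfolding P_def by blast
  ultimately show ?thesis
    by simp
qed

definition elem_sym :: "('a \<Rightarrow> 'b::comm_semiring_1) \<Rightarrow> 'a set \<Rightarrow> nat \<Rightarrow> 'b" where
  "elem_sym x C k = (\<Sum>S | S \<subseteq> C \<and> card S = k. \<Prod>i\<in>S. x i)"

lemma of_nat_elem_sym: "of_nat (elem_sym x C k) = elem_sym (\<lambda>i. of_nat (x i)) C k"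
  by (simp add: elem_sym_def)

lemma finite_subsets_card: "finite C \<Longrightarrow> finite {S. S \<subseteq> C \<and> card S = k}"
  by (rule finite_subset[of _ "Pow C"]) auto

lemma elem_sym_insert:
  assumes "finite C" "v \<notin> C"
  shows "elem_sym x (insert v C) (Suc k) = elem_sym x C (Suc k) + x v * elem_sym x C k"
proof -
  have fresh: "finite T" "v \<notin> T" if "T \<subseteq> C" for T
    using that assms finite_subset by auto
  then have card_insert: "card (insert v T) = Suc (card T)" if "T \<subseteq> C" for T
    using that by simp
  have split: "{S. S \<subseteq> insert v C \<and> card S = Suc k}
      = {S. S \<subseteq> C \<and> card S = Suc k} \<union> insert v ` {S. S \<subseteq> C \<and> card S = k}"
    unfolding subset_insert_lemma using card_insert by auto
  have "inj_on (insert v) {S. S \<subseteq> C \<and> card S = k}"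
    using fresh by (intro inj_onI) (metis Diff_insert_absorb mem_Collect_eq)
  moreover have "(\<Prod>i\<in>insert v S. x i) = x v * (\<Prod>i\<in>S. x i)" if "S \<subseteq> C" for S
    using fresh[OF that] by simp
  ultimately have "(\<Sum>S\<in>insert v ` {S. S \<subseteq> C \<and> card S = k}. \<Prod>i\<in>S. x i) = x v * elem_sym x C k"
    by (simp add: sum.reindex elem_sym_def sum_distrib_left)
  moreover have "{S. S \<subseteq> C \<and> card S = Suc k} \<inter> insert v ` {S. S \<subseteq> C \<and> card S = k} = {}"
    using assms(2) by auto
  ultimately show ?thesis
    unfolding elem_sym_def split using assms(1) finite_subsets_card
    by (simp add: sum.union_disjoint)
qed

lemma sum_prod_list_distinct_lists:
  assumes "finite C"
  shows "(\<Sum>xs | distinct xs \<and> length xs = k \<and> set xs \<subseteq> C. prod_list (map x xs)) = fact k * elem_sym x C k"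
proof -
  let ?L = "{xs. distinct xs \<and> length xs = k \<and> set xs \<subseteq> C}"
  let ?T = "{S. S \<subseteq> C \<and> card S = k}"
  have "finite ?L"
    by (rule finite_subset[OF _ finite_lists_length_eq[OF assms, of k]]) auto
  moreover have "set ` ?L \<subseteq> ?T"
    by (auto simp: distinct_card)
  ultimately have "(\<Sum>S\<in>?T. \<Sum>xs | xs \<in> ?L \<and> set xs = S. prod_list (map x xs))
      = (\<Sum>xs\<in>?L. prod_list (map x xs))"
    by (rule sum.group[OF _ finite_subsets_card[OF assms]])
  then have "(\<Sum>xs\<in>?L. prod_list (map x xs))
      = (\<Sum>S\<in>?T. \<Sum>xs | xs \<in> ?L \<and> set xs = S. prod_list (map x xs))"
    by (rule sym)
  also have "\<dots> = (\<Sum>S\<in>?T. fact k * (\<Prod>i\<in>S. x i))"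
  proof (rule sum.cong[OF refl])
    fix S
    assume S: "S \<in> ?T"
    then have "{xs. xs \<in> ?L \<and> set xs = S} = permutations_of_set S"
      by (auto simp: permutations_of_set_def distinct_card)
    moreover have "prod_list (map x xs) = (\<Prod>i\<in>S. x i)" if "xs \<in> permutations_of_set S" for xs
      using that by (auto simp: permutations_of_set_def prod.distinct_set_conv_list)
    ultimately show "(\<Sum>xs | xs \<in> ?L \<and> set xs = S. prod_list (map x xs)) = fact k * (\<Prod>i\<in>S. x i)"
      using S finite_subset[OF _ assms] by (simp add: card_permutations_of_set)
  qed
  also have "\<dots> = fact k * elem_sym x C k"
    by (simp add: elem_sym_def sum_distrib_left)
  finally show ?thesis .
qed

lemma six_length_gt_iff_distinct:
  assumes "finite S" "f ` S \<subseteq> S" "v \<in> S"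
  shows "k < six_length f v \<longleftrightarrow> distinct (v # map (\<lambda>i. (f ^^ Suc i) v) [0..<k])"
proof -
  have "k < six_length f v \<longleftrightarrow> inj_on (\<lambda>i. (f ^^ i) v) {..k}"
    by (rule six_length_gt_iff_inj[OF assms])
  also have "\<dots> \<longleftrightarrow> distinct (map (\<lambda>i. (f ^^ i) v) [0..<Suc k])"
    by (simp only: distinct_map distinct_upt set_upt atLeast0LessThan lessThan_Suc_atMost simp_thms)
  also have "map (\<lambda>i. (f ^^ i) v) [0..<Suc k] = v # map (\<lambda>i. (f ^^ Suc i) v) [0..<k]"
    by (simp only: map_upt_Suc) simp
  finally show ?thesis .
qed

lemma card_six_length_gt:
  assumes "finite S" "v \<in> S"
  shows "card {f \<in> degree_maps S S d. k < six_length f v} * (\<Prod>i<k. card S - i)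
       = fact k * elem_sym d (S - {v}) k * card (degree_maps S S d)"
proof -
  let ?F = "degree_maps S S d"
  let ?L = "{xs. distinct xs \<and> length xs = k \<and> set xs \<subseteq> S - {v}}"
  let ?orbit = "\<lambda>xs. {f \<in> ?F. orbit_prefix f v xs}"
  have maps_to: "f ` S \<subseteq> S" if "f \<in> ?F" for f
    using that by (auto simp: degree_maps_def)
  have iterates: "(f ^^ i) v \<in> S" if "f \<in> ?F" for f i
    by (induction i) (use maps_to[OF that] assms(2) in auto)
  have "{f \<in> ?F. k < six_length f v} = (\<Union>xs\<in>?L. ?orbit xs)"
  proof -
    have "k < six_length f v \<longleftrightarrow> (\<exists>xs\<in>?L. orbit_prefix f v xs)" if "f \<in> ?F" for f
      unfolding six_length_gt_iff_distinct[OF assms(1) maps_to[OF that] assms(2)] orbit_prefix_iff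
      using iterates[OF that] by (force simp: image_iff simp del: funpow.simps)
    then show ?thesis by blast
  qed
  moreover have "?orbit xs \<inter> ?orbit ys = {}" if "xs \<in> ?L" "ys \<in> ?L" "xs \<noteq> ys" for xs ys
    using that by (auto simp: orbit_prefix_iff)
  moreover have "finite ?L"
    by (rule finite_subset[OF _ finite_lists_length_eq[of "S - {v}" k]]) (use assms(1) in auto)
  ultimately have "card {f \<in> ?F. k < six_length f v} = (\<Sum>xs\<in>?L. card (?orbit xs))"
    using finite_degree_maps[OF assms(1,1)] by (simp add: card_UN_disjoint)
  then have "card {f \<in> ?F. k < six_length f v} * (\<Prod>i<k. card S - i)
      = (\<Sum>xs\<in>?L. card (?orbit xs) * (\<Prod>i<length xs. card S - i))"
    by (simp add: sum_distrib_right)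
  also have "\<dots> = (\<Sum>xs\<in>?L. prod_list (map d xs) * card ?F)"
    using assms by (intro sum.cong refl card_degree_maps_orbit_prefix) auto
  also have "\<dots> = fact k * elem_sym d (S - {v}) k * card ?F"
    using sum_prod_list_distinct_lists[of "S - {v}" d k] assms(1)
    by (simp add: sum_distrib_right[symmetric])
  finally show ?thesis .
qed

lemma falling_Suc: "k < n \<Longrightarrow> falling n (Suc k) = falling n k * real (n - k)"
proof -
  assume "k < n"
  define m where "m = n - Suc k"
  then have "n - k = Suc m"
    using \<open>k < n\<close> by simp
  then have "falling n k * real (n - k) = fact n / (real (Suc m) * fact m) * real (Suc m)"
    unfolding falling_def by (simp del: of_nat_Suc)
  also have "\<dots> = falling n (Suc k)"
    unfolding falling_def m_def[symmetric] by (simp del: of_nat_Suc)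
  finally show ?thesis ..
qed

lemma falling_eq_prod: "k \<le> n \<Longrightarrow> falling n k = (\<Prod>i<k. real (n - i))"
proof (induction k)
  case 0
  then show ?case by (simp add: falling_def)
next
  case (Suc k)
  then show ?case by (simp add: falling_Suc)
qed

lemma falling_pos: "0 < falling n k"
  by (simp add: falling_def)

lemma prob_six_gt_eq:
  assumes "degree_seq n d" "v \<in> {1..n}" "k \<le> n"
  shows "prob_six_gt n d v k = fact k * elem_sym (\<lambda>i. real (d i)) ({1..n} - {v}) k / falling n k"
proof -
  let ?F = "degree_maps {1..n} {1..n} d"
  have "finite ?F"
    by (rule finite_degree_maps) auto
  moreover have "?F \<noteq> {}"
    by (rule degree_maps_nonempty) (use assms(1) in \<open>auto simp: degree_seq_def\<close>)
  ultimately have prob: "prob_six_gt n d v k = card {f \<in> ?F. k < six_length f v} / card ?F"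
    unfolding prob_six_gt_def Fd_eq_degree_maps by (simp add: measure_pmf_of_set Int_def)
  have "real (card {f \<in> ?F. k < six_length f v}) * falling n k
      = fact k * elem_sym (\<lambda>i. real (d i)) ({1..n} - {v}) k * card ?F"
    using arg_cong[OF card_six_length_gt[of "{1..n}" v d k], of real] assms(2,3)
    by (simp add: falling_eq_prod of_nat_elem_sym)
  then show ?thesis
    unfolding prob using \<open>finite ?F\<close> \<open>?F \<noteq> {}\<close> falling_pos[of n k]
    by (simp add: field_simps)
qed

lemma prob_six_gt_Suc_le: "prob_six_gt n d v (Suc k) \<le> prob_six_gt n d v k"
  unfolding prob_six_gt_def by (rule measure_pmf.finite_measure_mono) auto

lemma g_n_eq_prob_six_gt:
  assumes "degree_seq n d" "v \<in> {1..n}" "1 \<le> k" "k \<le> n"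
  shows "real (n - k + 1) * g_n n d k
       = real (n - k + 1) * prob_six_gt n d v k + real k * real (d v) * prob_six_gt n d v (k - 1)"
proof -
  obtain j where k: "k = Suc j"
    using assms(3) by (metis Suc_le_D One_nat_def)
  let ?x = "\<lambda>i. real (d i)"
  let ?C = "{1..n} - {v}"
  define m where "m = real (n - j)"
  have m: "real (n - k + 1) = m" "0 < m"
    using assms(4) k by (simp_all add: m_def of_nat_diff)
  have "g_n n d k = fact k / falling n k * elem_sym ?x {1..n} k"
    by (simp add: g_n_def elem_sym_def)
  also have "\<dots> = fact k / (falling n j * m) * (elem_sym ?x ?C k + ?x v * elem_sym ?x ?C j)"
    using elem_sym_insert[of ?C v ?x j] falling_Suc[of j n] assms(2,4) k
    by (simp add: insert_absorb m_def)
  finally have g: "g_n n d k = fact k / (falling n j * m) * (elem_sym ?x ?C k + ?x v * elem_sym ?x ?C j)" .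
  have p: "prob_six_gt n d v k = fact k * elem_sym ?x ?C k / (falling n j * m)"
    "prob_six_gt n d v (k - 1) = fact j * elem_sym ?x ?C j / falling n j"
    using prob_six_gt_eq[OF assms(1,2)] falling_Suc[of j n] assms(4) k by (simp_all add: m_def)
  show ?thesis
    unfolding m(1) g p using m(2) falling_pos[of n j] k by (simp add: field_simps)
qed

lemma weighted_mean_bounds:
  fixes m c p q g :: real
  assumes "0 < m" "0 \<le> c" "q \<le> p" "m * g = m * q + c * p"
  shows "q \<le> m / (m + c) * g" "m / (m + c) * g \<le> p"
proof -
  have "m / (m + c) * g = (m * q + c * p) / (m + c)"
    using assms(4) by (simp add: divide_simps)
  moreover have "(m + c) * q \<le> m * q + c * p" "m * q + c * p \<le> (m + c) * p"
    using assms(1-3) by (simp_all add: algebra_simps mult_left_mono)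
  ultimately show "q \<le> m / (m + c) * g" "m / (m + c) * g \<le> p"
    using assms(1,2) by (simp_all add: field_simps)
qed

theorem mainTheorem6:
  fixes n k v :: nat and d :: "nat \<Rightarrow> nat"
  assumes "degree_seq n d"
    and "v \<in> {1..n}"
    and "2 \<le> k" and "k + 2 \<le> n"
  shows "real (n - k) / (real (n - k) + real (k + 1) * real (d v)) * g_n n d (k + 1)
           \<le> prob_six_gt n d v k
       \<and> prob_six_gt n d v k
           \<le> real (n - k + 1) / (real (n - k + 1) + real k * real (d v)) * g_n n d k"
proof -
  let ?p = "prob_six_gt n d v"
  have lower: "real (n - k) * g_n n d (k + 1)
      = real (n - k) * ?p (k + 1) + real (k + 1) * real (d v) * ?p k"
    using g_n_eq_prob_six_gt[OF assms(1,2), of "k + 1"] assms(4) by simp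
  have upper: "real (n - k + 1) * g_n n d k
      = real (n - k + 1) * ?p k + real k * real (d v) * ?p (k - 1)"
    using g_n_eq_prob_six_gt[OF assms(1,2), of k] assms(3,4) by simp
  have "?p (k + 1) \<le> ?p k" "?p k \<le> ?p (k - 1)"
    using prob_six_gt_Suc_le[of n d v k] prob_six_gt_Suc_le[of n d v "k - 1"] assms(3) by simp_all
  then show ?thesis
    using weighted_mean_bounds(2)[OF _ _ _ lower] weighted_mean_bounds(1)[OF _ _ _ upper] assms(4)
    by simp
qed

end
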